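(* The cycle $C_5$ is the only connected graph $G$ without a triangle $K_3$ as a subgraph for which $\chi(G)=3$ and $\mathrm{sn}(G)=n-2$, where $n$ is the order of $G$.
   Context: All graphs are finite and simple. For a graph $G=(V,E)$ with $k=\chi(G)$, a proper $k$-colouring is a map $c:V\to[k]$ with $c(u)\neq c(v)$ for every edge $uv$. A set $S\subseteq V$ is a determining set for $(G,c)$ if there is no proper $k$-colouring $c'\neq c$ with $c'(s)=c(s)$ for all $s\in S$; a critical set is an inclusion-minimal determining set. $\mathrm{sn}(G)$ is the minimum size of a critical set over all proper $\chi(G)$-colourings $c$ of $G$ (equivalently, the minimum number of vertices coloured in a partial colouring that extends uniquely to a proper $\chi(G)$-colouring). *)

theory Defs
  imports "HOL-Library.FuncSet"
begin

definition simple_graph :: "'a set \<Rightarrow> 'a set set \<Rightarrow> bool" where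
  "simple_graph V E \<longleftrightarrow> finite V \<and>
     (\<forall>e\<in>E. \<exists>u v. e = {u, v} \<and> u \<noteq> v \<and> u \<in> V \<and> v \<in> V)"

definition adj :: "'a set set \<Rightarrow> 'a \<Rightarrow> 'a \<Rightarrow> bool" where
  "adj E u v \<longleftrightarrow> {u, v} \<in> E"

definition connected_graph :: "'a set \<Rightarrow> 'a set set \<Rightarrow> bool" where
  "connected_graph V E \<longleftrightarrow> V \<noteq> {} \<and>
     (\<forall>u\<in>V. \<forall>v\<in>V. (adj E)\<^sup>*\<^sup>* u v)"

definition triangle_free :: "'a set set \<Rightarrow> bool" where
  "triangle_free E \<longleftrightarrow> \<not> (\<exists>x y z. adj E x y \<and> adj E y z \<and> adj E x z)"

definition proper_colouring :: "'a set \<Rightarrow> 'a set set \<Rightarrow> nat \<Rightarrow> ('a \<Rightarrow> nat) \<Rightarrow> bool" where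
  "proper_colouring V E k c \<longleftrightarrow> c \<in> V \<rightarrow>\<^sub>E {1..k} \<and>
     (\<forall>u\<in>V. \<forall>v\<in>V. adj E u v \<longrightarrow> c u \<noteq> c v)"

definition chromatic_number :: "'a set \<Rightarrow> 'a set set \<Rightarrow> nat" where
  "chromatic_number V E = (LEAST k. \<exists>c. proper_colouring V E k c)"

definition determining_set :: "'a set \<Rightarrow> 'a set set \<Rightarrow> ('a \<Rightarrow> nat) \<Rightarrow> 'a set \<Rightarrow> bool" where
  "determining_set V E c S \<longleftrightarrow> S \<subseteq> V \<and>
     \<not> (\<exists>c'. proper_colouring V E (chromatic_number V E) c' \<and> c' \<noteq> c \<and> (\<forall>s\<in>S. c' s = c s))"

definition critical_set :: "'a set \<Rightarrow> 'a set set \<Rightarrow> ('a \<Rightarrow> nat) \<Rightarrow> 'a set \<Rightarrow> bool" where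
  "critical_set V E c S \<longleftrightarrow> determining_set V E c S \<and>
     (\<forall>T. T \<subset> S \<longrightarrow> \<not> determining_set V E c T)"

definition sn :: "'a set \<Rightarrow> 'a set set \<Rightarrow> nat" where
  "sn V E = Min {card S | S c. proper_colouring V E (chromatic_number V E) c \<and> critical_set V E c S}"

definition C5_V :: "nat set" where "C5_V = {0..<5}"
definition C5_E :: "nat set set" where "C5_E = {{i, (i + 1) mod 5} | i. i < 5}"

definition graph_iso :: "'a set \<Rightarrow> 'a set set \<Rightarrow> 'b set \<Rightarrow> 'b set set \<Rightarrow> bool" where
  "graph_iso V E V' E' \<longleftrightarrow> (\<exists>f. bij_betw f V V' \<and>
     (\<forall>u\<in>V. \<forall>v\<in>V. {u, v} \<in> E \<longleftrightarrow> {f u, f v} \<in> E'))"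

end

theory Submission
  imports Defs
begin

text \<open>
  For \<open>C\<^sub>5\<close> itself every proper 3-colouring survives fixing any two vertices (a finite check),
  while the colouring 1, 2, 1, 2, 3 is fixed by the colours of three vertices; so \<open>sn = 3 = n - 2\<close>.

  Conversely, when \<open>G\<close> is not \<open>C\<^sub>5\<close> it suffices to find a 3-colouring and three vertices whose
  colours are forced by those of all other vertices, for then \<open>sn \<le> n - 3\<close>. A vertex is forced as
  soon as two of its neighbours carry different colours. Take a 3-colouring minimising the class
  \<open>W\<close> of colour 3: every vertex of \<open>W\<close> then sees both other colours, so if \<open>|W| \<ge> 3\<close> any three
  vertices of \<open>W\<close> are forced. Otherwise fix \<open>w \<in> W\<close>. A Kempe chain argument gives a path in
  colours 1 and 2 from a 1-coloured to a 2-coloured neighbour of \<open>w\<close>, and a shortest one closes,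
  together with \<open>w\<close>, an induced odd cycle of length at least 5. On a longer cycle three forced
  vertices are found directly; on a 5-cycle they are found by a case analysis on \<open>|W|\<close> and on the
  vertices adjacent to the cycle (by connectivity there is one unless \<open>G = C\<^sub>5\<close>), after
  recolouring at most two vertices.
\<close>

lemma adj_commute: "adj E u v \<longleftrightarrow> adj E v u"
  by (simp add: adj_def insert_commute)

lemma adj_sym: "adj E u v \<Longrightarrow> adj E v u"
  by (simp add: adj_commute)

lemma adj_simple_graphD:
  assumes "simple_graph V E" "adj E u v"
  shows "u \<in> V" "v \<in> V" "u \<noteq> v"
proof -
  from assms obtain a b where "{u, v} = {a, b}" "a \<noteq> b" "a \<in> V" "b \<in> V"
    unfolding adj_def simple_graph_def by blast
  then show "u \<in> V" "v \<in> V" "u \<noteq> v" by (auto simp: doubleton_eq_iff)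
qed

lemma connected_graph_edge_leaving:
  assumes "connected_graph V E" "x \<in> C" "C \<subseteq> V" "y \<in> V - C"
  shows "\<exists>u z. u \<in> C \<and> z \<notin> C \<and> adj E u z"
proof -
  have "(adj E)\<^sup>*\<^sup>* x y" using assms unfolding connected_graph_def by blast
  then have "y \<notin> C \<longrightarrow> (\<exists>u z. u \<in> C \<and> z \<notin> C \<and> adj E u z)"
    using assms(2) by induction blast+
  then show ?thesis using assms(4) by blast
qed

lemma proper_colouring_pullback:
  assumes "f \<in> V \<rightarrow> V'" "\<And>u v. u \<in> V \<Longrightarrow> v \<in> V \<Longrightarrow> adj E u v \<Longrightarrow> adj E' (f u) (f v)"
    and "proper_colouring V' E' k t"
  shows "proper_colouring V E k (restrict (t \<circ> f) V)"
  using assms unfolding proper_colouring_def by (auto simp: PiE_iff Pi_iff)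

lemma determining_setI:
  assumes "proper_colouring V E (chromatic_number V E) c" "S \<subseteq> V"
    and "\<And>c'. proper_colouring V E (chromatic_number V E) c' \<Longrightarrow> \<forall>s\<in>S. c' s = c s \<Longrightarrow>
      \<forall>v\<in>V. c' v = c v"
  shows "determining_set V E c S"
  unfolding determining_set_def
proof (intro conjI notI)
  assume "\<exists>c'. proper_colouring V E (chromatic_number V E) c' \<and> c' \<noteq> c \<and> (\<forall>s\<in>S. c' s = c s)"
  then obtain c' where c': "proper_colouring V E (chromatic_number V E) c'" "c' \<noteq> c"
    "\<forall>s\<in>S. c' s = c s" by blast
  have "c' = c"
    using assms(1) c'(1) assms(3)[OF c'(1,3)] unfolding proper_colouring_def by (blast intro: PiE_ext)
  then show False using c'(2) by blast
qed (fact assms(2))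

lemma ex_critical_subset:
  assumes "finite V" "determining_set V E c S"
  shows "\<exists>T\<subseteq>S. critical_set V E c T"
proof -
  have "finite S" using assms by (auto simp: determining_set_def intro: finite_subset)
  then have "finite {T. T \<subseteq> S \<and> determining_set V E c T}" by simp
  then obtain T where T: "T \<subseteq> S" "determining_set V E c T"
    and min: "\<And>T'. T' \<subseteq> S \<Longrightarrow> determining_set V E c T' \<Longrightarrow> T' \<subseteq> T \<Longrightarrow> T = T'"
    using finite_has_minimal2[of _ S] assms(2) by (metis (no_types, lifting) mem_Collect_eq order_refl)
  have "critical_set V E c T"
    unfolding critical_set_def using T min by blast
  then show ?thesis using T(1) by blast
qed

lemma finite_critical_set_sizes:
  assumes "finite V"
  shows "finite {card S | S c. proper_colouring V E (chromatic_number V E) c \<and> critical_set V E c S}"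
proof (rule finite_subset[of _ "{..card V}"])
  show "{card S | S c. proper_colouring V E (chromatic_number V E) c \<and> critical_set V E c S} \<subseteq> {..card V}"
    using assms by (auto simp: critical_set_def determining_set_def intro!: card_mono)
qed simp

lemma sn_le_card_determining_set:
  assumes "finite V" "proper_colouring V E (chromatic_number V E) c" "determining_set V E c S"
  shows "sn V E \<le> card S"
proof -
  obtain T where T: "T \<subseteq> S" "critical_set V E c T" using ex_critical_subset[OF assms(1,3)] by blast
  have "finite S" using assms(1,3) by (auto simp: determining_set_def intro: finite_subset)
  have "card T \<in> {card S | S c. proper_colouring V E (chromatic_number V E) c \<and> critical_set V E c S}"
    using assms(2) T(2) by blast
  then have "sn V E \<le> card T"
    unfolding sn_def by (rule Min_le[OF finite_critical_set_sizes[OF assms(1)]])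
  also have "\<dots> \<le> card S" using T(1) \<open>finite S\<close> by (rule card_mono[rotated])
  finally show ?thesis .
qed

lemma sn_lower_bound:
  assumes "finite V" "proper_colouring V E (chromatic_number V E) c"
    and "\<And>c S. proper_colouring V E (chromatic_number V E) c \<Longrightarrow> determining_set V E c S \<Longrightarrow> k \<le> card S"
  shows "k \<le> sn V E"
proof -
  have "determining_set V E c V" using assms(2) by (rule determining_setI) simp_all
  then obtain T where "critical_set V E c T" using ex_critical_subset[OF assms(1)] by blast
  then have "card T \<in> {card S | S c. proper_colouring V E (chromatic_number V E) c \<and> critical_set V E c S}"
    using assms(2) by blast
  moreover have "k \<le> n"
    if "n \<in> {card S | S c. proper_colouring V E (chromatic_number V E) c \<and> critical_set V E c S}" for n
    using that assms(3) unfolding critical_set_def by blast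
  ultimately show ?thesis
    unfolding sn_def using finite_critical_set_sizes[OF assms(1)] by (subst Min_ge_iff) auto
qed

section \<open>Forced colours in triangle-free 3-chromatic graphs\<close>

locale triangle_free_3_chromatic =
  fixes V :: "'a set" and E :: "'a set set"
  assumes simple: "simple_graph V E" and triangle_free: "triangle_free E"
    and chromatic: "chromatic_number V E = 3"
begin

abbreviation colouring3 :: "('a \<Rightarrow> nat) \<Rightarrow> bool" where
  "colouring3 c \<equiv> proper_colouring V E 3 c"

lemma finite_V: "finite V"
  using simple by (simp add: simple_graph_def)

lemma adj_in_V: "adj E u v \<Longrightarrow> u \<in> V" "adj E u v \<Longrightarrow> v \<in> V"
  using adj_simple_graphD[OF simple] by blast+

lemma adj_neq: "adj E u v \<Longrightarrow> u \<noteq> v"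
  using adj_simple_graphD[OF simple] by blast

lemma no_triangle: "adj E x y \<Longrightarrow> adj E y z \<Longrightarrow> adj E x z \<Longrightarrow> False"
  using triangle_free by (auto simp: triangle_free_def)

lemma colouring3_range: "colouring3 c \<Longrightarrow> v \<in> V \<Longrightarrow> c v = 1 \<or> c v = 2 \<or> c v = 3"
  unfolding proper_colouring_def by (auto simp: PiE_iff)

lemma colouring3_adj: "colouring3 c \<Longrightarrow> adj E u v \<Longrightarrow> c u \<noteq> c v"
  unfolding proper_colouring_def using adj_in_V by blast

lemma ex_colouring3: "\<exists>c. colouring3 c"
proof -
  obtain h where h: "bij_betw h V {0..<card V}"
    using ex_bij_betw_finite_nat[OF finite_V] by blast
  have "proper_colouring V E (card V) (restrict (\<lambda>v. Suc (h v)) V)"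
    unfolding proper_colouring_def
  proof (intro conjI ballI impI)
    show "restrict (\<lambda>v. Suc (h v)) V \<in> V \<rightarrow>\<^sub>E {1..card V}"
      using bij_betwE[OF h] by (auto simp: Suc_le_eq)
    fix u v assume "u \<in> V" "v \<in> V" "adj E u v"
    then show "restrict (\<lambda>v. Suc (h v)) V u \<noteq> restrict (\<lambda>v. Suc (h v)) V v"
      using adj_neq bij_betw_imp_inj_on[OF h] by (auto dest: inj_onD)
  qed
  then have "\<exists>k c. proper_colouring V E k c" by blast
  then have "\<exists>c. proper_colouring V E (chromatic_number V E) c"
    unfolding chromatic_number_def by (rule LeastI_ex)
  then show ?thesis using chromatic by simp
qed

lemma not_2_colourable: "\<not> proper_colouring V E 2 c"
proof
  assume "proper_colouring V E 2 c"
  then have "chromatic_number V E \<le> 2"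
    unfolding chromatic_number_def by (intro Least_le) blast
  then show False using chromatic by simp
qed

lemma colouring3_upd:
  assumes c: "colouring3 c" and "v \<in> V" "k \<in> {1, 2, 3}" and free: "\<And>u. adj E v u \<Longrightarrow> c u \<noteq> k"
  shows "colouring3 (c(v := k))"
  unfolding proper_colouring_def
proof (intro conjI ballI impI)
  show "c(v := k) \<in> V \<rightarrow>\<^sub>E {1..3}"
    using assms unfolding proper_colouring_def by (auto simp: PiE_iff extensional_def)
  fix x y assume "x \<in> V" "y \<in> V" and xy: "adj E x y"
  have "c x \<noteq> c y" "x \<noteq> y" using colouring3_adj[OF c xy] adj_neq[OF xy] by auto
  moreover have "c y \<noteq> k" if "x = v" using free xy that by blast
  moreover have "c x \<noteq> k" if "y = v" using free xy that adj_commute by metis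
  ultimately show "(c(v := k)) x \<noteq> (c(v := k)) y" by auto
qed

text \<open>Two differently coloured neighbours leave a single colour for \<open>v\<close>.\<close>
lemma forced_colour:
  assumes c: "colouring3 c" and c': "colouring3 c'" and "adj E v x" "adj E v y" "c x \<noteq> c y"
    and "c' x = c x" "c' y = c y"
  shows "c' v = c v"
proof -
  have "c v \<noteq> c x" "c v \<noteq> c y" "c' v \<noteq> c x" "c' v \<noteq> c y"
    using colouring3_adj[OF c assms(3)] colouring3_adj[OF c assms(4)]
      colouring3_adj[OF c' assms(3)] colouring3_adj[OF c' assms(4)] assms(6,7) by simp_all
  moreover have "v \<in> V" "x \<in> V" "y \<in> V" using adj_in_V assms(3,4) by auto
  then have "c v = 1 \<or> c v = 2 \<or> c v = 3" "c' v = 1 \<or> c' v = 2 \<or> c' v = 3"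
    "c x = 1 \<or> c x = 2 \<or> c x = 3" "c y = 1 \<or> c y = 2 \<or> c y = 3"
    using colouring3_range c c' by blast+
  ultimately show ?thesis using assms(5) by (elim disjE) auto
qed

definition swap12 :: "('a \<Rightarrow> nat) \<Rightarrow> 'a set \<Rightarrow> 'a \<Rightarrow> nat" where
  "swap12 c R v = (if v \<in> R then 3 - c v else c v)"

lemma colouring3_swap12:
  assumes c: "colouring3 c" and R: "\<And>v. v \<in> R \<Longrightarrow> v \<in> V \<and> c v \<noteq> 3"
    and closed: "\<And>x y. x \<in> R \<Longrightarrow> adj E x y \<Longrightarrow> c y \<noteq> 3 \<Longrightarrow> y \<in> R"
  shows "colouring3 (swap12 c R)"
  unfolding proper_colouring_def
proof (intro conjI ballI impI)
  have in12: "c v = 1 \<or> c v = 2" if "v \<in> R" for v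
    using R[OF that] colouring3_range[OF c] by blast
  show "swap12 c R \<in> V \<rightarrow>\<^sub>E {1..3}"
  proof (rule PiE_I)
    fix v assume "v \<in> V"
    then show "swap12 c R v \<in> {1..3}"
      using in12[of v] colouring3_range[OF c \<open>v \<in> V\<close>] unfolding swap12_def by auto
  next
    fix v assume "v \<notin> V"
    then have "v \<notin> R" using R by blast
    then show "swap12 c R v = undefined"
      using c \<open>v \<notin> V\<close> unfolding swap12_def proper_colouring_def by (simp add: PiE_iff extensional_def)
  qed
  have swapped: "swap12 c R x \<noteq> swap12 c R y" if "adj E x y" "x \<in> R" for x y
  proof (cases "y \<in> R")
    case True
    then show ?thesis
      using in12[OF that(2)] in12[OF True] colouring3_adj[OF c that(1)] that(2) True
      unfolding swap12_def by auto
  next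
    case False
    then have "c y = 3" using closed that by blast
    moreover have "c x = 1 \<or> c x = 2" using in12 that(2) by blast
    ultimately show ?thesis using that False unfolding swap12_def by auto
  qed
  fix x y assume "x \<in> V" "y \<in> V" and xy: "adj E x y"
  show "swap12 c R x \<noteq> swap12 c R y"
  proof (cases "x \<in> R \<or> y \<in> R")
    case True
    then show ?thesis using swapped[OF xy] swapped[of y x] xy adj_commute[of E x y] by auto
  next
    case False
    then show ?thesis using colouring3_adj[OF c xy] unfolding swap12_def by simp
  qed
qed

definition forced_triple :: bool where
  "forced_triple \<longleftrightarrow>
     (\<exists>c U. colouring3 c \<and> U \<subseteq> V \<and> card U = 3 \<and> determining_set V E c (V - U))"

lemma sn_add_3_le_if_forced_triple:
  assumes forced_triple
  shows "sn V E + 3 \<le> card V"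
proof -
  obtain c U where c: "colouring3 c" and U: "U \<subseteq> V" "card U = 3"
    and det: "determining_set V E c (V - U)"
    using assms unfolding forced_triple_def by blast
  have "sn V E \<le> card (V - U)"
    using sn_le_card_determining_set[OF finite_V _ det] c chromatic by simp
  moreover have "card U \<le> card V" using U(1) finite_V by (rule card_mono[rotated])
  ultimately show ?thesis using U finite_V by (simp add: card_Diff_subset finite_subset)
qed

text \<open>The colours of \<open>u1\<close>, \<open>u2\<close>, \<open>u3\<close> are forced in this order, each by two neighbours
  whose colours are already known.\<close>
lemma forced_tripleI:
  assumes c: "colouring3 c" and distinct: "u1 \<noteq> u2" "u1 \<noteq> u3" "u2 \<noteq> u3"
    and u1: "adj E u1 x1" "adj E u1 y1" "c x1 \<noteq> c y1" "x1 \<notin> {u2, u3}" "y1 \<notin> {u2, u3}"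
    and u2: "adj E u2 x2" "adj E u2 y2" "c x2 \<noteq> c y2" "x2 \<noteq> u3" "y2 \<noteq> u3"
    and u3: "adj E u3 x3" "adj E u3 y3" "c x3 \<noteq> c y3"
  shows forced_triple
  unfolding forced_triple_def
proof (intro exI conjI)
  let ?U = "{u1, u2, u3}"
  show "?U \<subseteq> V" using adj_in_V u1 u2 u3 by blast
  show "card ?U = 3" using distinct by simp
  show "determining_set V E c (V - ?U)"
  proof (rule determining_setI)
    show "proper_colouring V E (chromatic_number V E) c" using c chromatic by simp
    show "V - ?U \<subseteq> V" by blast
    fix c' assume c': "proper_colouring V E (chromatic_number V E) c'"
      and agree: "\<forall>s\<in>V - ?U. c' s = c s"
    then have c'3: "colouring3 c'" using chromatic by simp
    have known: "c' v = c v" if "adj E u v" "v \<notin> ?U" for u v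
      using agree adj_in_V that by blast
    have "c' u1 = c u1"
      using forced_colour[OF c c'3 u1(1,2,3)] known u1 adj_neq by blast
    moreover have "c' u2 = c u2"
      using forced_colour[OF c c'3 u2(1,2,3)] known u2 adj_neq \<open>c' u1 = c u1\<close> by blast
    moreover have "c' u3 = c u3"
      using forced_colour[OF c c'3 u3(1,2,3)] known u3 adj_neq \<open>c' u1 = c u1\<close> \<open>c' u2 = c u2\<close>
      by blast
    ultimately show "\<forall>v\<in>V. c' v = c v" using agree by blast
  qed
qed (fact c)

definition kempe_path :: "('a \<Rightarrow> nat) \<Rightarrow> 'a \<Rightarrow> (nat \<Rightarrow> 'a) \<Rightarrow> nat \<Rightarrow> bool" where
  "kempe_path c w p n \<longleftrightarrow> adj E w (p 0) \<and> c (p 0) = 1 \<and> adj E w (p n) \<and> c (p n) = 2 \<and>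
     (\<forall>i\<le>n. c (p i) \<noteq> 3) \<and> (\<forall>i<n. adj E (p i) (p (Suc i)))"

lemma kempe_path_prefix:
  assumes "kempe_path c w p n" "m \<le> n" "adj E w (p m)" "c (p m) = 2"
  shows "kempe_path c w p m"
  using assms unfolding kempe_path_def by auto

lemma kempe_path_suffix:
  assumes "kempe_path c w p n" "m \<le> n" "adj E w (p m)" "c (p m) = 1"
  shows "kempe_path c w (\<lambda>k. p (k + m)) (n - m)"
  using assms unfolding kempe_path_def by auto

lemma kempe_path_shortcut:
  assumes p: "kempe_path c w p n" and "i < j" "j \<le> n" and chord: "adj E (p i) (p j)"
  defines "d \<equiv> j - i - 1"
  shows "kempe_path c w (\<lambda>k. if k \<le> i then p k else p (k + d)) (n - d)"
proof -
  let ?q = "\<lambda>k. if k \<le> i then p k else p (k + d)"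
  have d: "i + 1 + d = j" "i < n - d" using assms(2,3) unfolding d_def by auto
  have "?q (n - d) = p n" using d by auto
  moreover have "c (?q k) \<noteq> 3" if "k \<le> n - d" for k
    using p that d unfolding kempe_path_def by auto
  moreover have "adj E (?q k) (?q (Suc k))" if "k < n - d" for k
  proof (cases "k < i")
    case True
    then show ?thesis using p d unfolding kempe_path_def by auto
  next
    case False
    then show ?thesis
      using p chord d that unfolding kempe_path_def
      by (cases "k = i") (auto simp: add.commute)
  qed
  ultimately show ?thesis using p unfolding kempe_path_def by auto
qed

end

section \<open>Kempe chains for a smallest colour class\<close>

locale min_colouring3 = triangle_free_3_chromatic +
  fixes c0 :: "'a \<Rightarrow> nat"
  assumes colouring3_c0: "colouring3 c0"
    and min_colour3_class: "\<And>c. colouring3 c \<Longrightarrow> card {v\<in>V. c0 v = 3} \<le> card {v\<in>V. c v = 3}"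

lemma (in triangle_free_3_chromatic) ex_min_colouring3: "\<exists>c0. min_colouring3 V E c0"
proof -
  obtain c where "colouring3 c" using ex_colouring3 by blast
  then obtain c0 where "colouring3 c0"
    and "\<forall>c. colouring3 c \<longrightarrow> card {v\<in>V. c0 v = 3} \<le> card {v\<in>V. c v = 3}"
    using ex_has_least_nat[of colouring3 c "\<lambda>c. card {v\<in>V. c v = 3}"] by blast
  then have "min_colouring3 V E c0" by unfold_locales blast+
  then show ?thesis by blast
qed

context min_colouring3
begin

lemma colour3_class_cannot_shrink:
  assumes "colouring3 c" "w \<in> V" "c0 w = 3" "{v\<in>V. c v = 3} \<subseteq> {v\<in>V. c0 v = 3} - {w}"
  shows False
proof -
  have "card {v\<in>V. c v = 3} < card {v\<in>V. c0 v = 3}"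
    using assms(2-4) finite_V by (intro psubset_card_mono) auto
  then show False using min_colour3_class[OF assms(1)] by simp
qed

lemma colour3_vertex_sees_1_and_2:
  assumes "v \<in> V" "c0 v = 3"
  shows "\<exists>a b. adj E v a \<and> c0 a = 1 \<and> adj E v b \<and> c0 b = 2"
proof -
  have "\<exists>u. adj E v u \<and> c0 u = k" if "k \<in> {1, 2}" for k
  proof (rule ccontr)
    assume "\<nexists>u. adj E v u \<and> c0 u = k"
    then have "colouring3 (c0(v := k))"
      using assms that by (intro colouring3_upd[OF colouring3_c0]) auto
    then show False
      using assms that by (intro colour3_class_cannot_shrink[of "c0(v := k)" v]) auto
  qed
  then show ?thesis by (metis insertCI)
qed

lemma colouring3_recolour_to_3:
  assumes "x \<in> V" "\<forall>u\<in>{v\<in>V. c0 v = 3}. \<not> adj E x u"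
  shows "colouring3 (c0(x := 3))"
proof (rule colouring3_upd[OF colouring3_c0 assms(1)])
  fix u assume "adj E x u"
  then show "c0 u \<noteq> 3" using assms(2) adj_in_V(2) by blast
qed simp

lemma colour3_class_swap12: "{v\<in>V. swap12 c0 {v\<in>V. c0 v \<noteq> 3} v = 3} = {v\<in>V. c0 v = 3}"
  using colouring3_range[OF colouring3_c0] unfolding swap12_def by force

lemma min_colouring3_swap12: "min_colouring3 V E (swap12 c0 {v\<in>V. c0 v \<noteq> 3})"
proof -
  have "colouring3 (swap12 c0 {v\<in>V. c0 v \<noteq> 3})"
    by (rule colouring3_swap12[OF colouring3_c0]) (auto simp: adj_in_V)
  then show ?thesis using min_colour3_class colour3_class_swap12 by unfold_locales auto
qed

definition kempe_edge :: "'a \<Rightarrow> 'a \<Rightarrow> bool" where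
  "kempe_edge x y \<longleftrightarrow> adj E x y \<and> c0 x \<noteq> 3 \<and> c0 y \<noteq> 3"

definition kempe_component :: "'a \<Rightarrow> 'a set" where
  "kempe_component w = {v. \<exists>a. adj E w a \<and> c0 a = 1 \<and> kempe_edge\<^sup>*\<^sup>* a v}"

lemma kempe_component_colours:
  assumes "v \<in> kempe_component w"
  shows "v \<in> V" "c0 v = 1 \<or> c0 v = 2"
proof -
  from assms obtain a where a: "adj E w a" "c0 a = 1" "kempe_edge\<^sup>*\<^sup>* a v"
    unfolding kempe_component_def by blast
  from a(3) have "v \<in> V \<and> c0 v \<noteq> 3"
    by (induction rule: rtranclp_induct) (use a adj_in_V in \<open>auto simp: kempe_edge_def\<close>)
  then show "v \<in> V" "c0 v = 1 \<or> c0 v = 2" using colouring3_range[OF colouring3_c0] by auto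
qed

lemma kempe_component_closed:
  assumes "x \<in> kempe_component w" "adj E x y" "c0 y \<noteq> 3"
  shows "y \<in> kempe_component w"
proof -
  have "c0 x \<noteq> 3" using kempe_component_colours(2)[OF assms(1)] by auto
  then show ?thesis
    using assms unfolding kempe_component_def kempe_edge_def by (blast intro: rtranclp.rtrancl_into_rtrancl)
qed

text \<open>Otherwise swapping colours 1 and 2 on the component would free colour 1 for \<open>w\<close> and
  shrink the colour class 3.\<close>
lemma kempe_component_meets_colour_2:
  assumes w: "w \<in> V" "c0 w = 3"
  shows "\<exists>b\<in>kempe_component w. adj E w b \<and> c0 b = 2"
proof (rule ccontr)
  assume no_2: "\<not> (\<exists>b\<in>kempe_component w. adj E w b \<and> c0 b = 2)"
  let ?R = "kempe_component w"
  have nbrs: "swap12 c0 ?R u \<noteq> 1" if "adj E w u" for u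
  proof (cases "u \<in> ?R")
    case True
    then show ?thesis using no_2 that kempe_component_colours[OF True] unfolding swap12_def by auto
  next
    case False
    have "c0 u \<noteq> 1" using that False unfolding kempe_component_def by blast
    then show ?thesis using False unfolding swap12_def by simp
  qed
  have R: "v \<in> V \<and> c0 v \<noteq> 3" if "v \<in> ?R" for v
    using kempe_component_colours[OF that] by auto
  have "colouring3 (swap12 c0 ?R)"
    by (rule colouring3_swap12[OF colouring3_c0 R kempe_component_closed])
  then have "colouring3 ((swap12 c0 ?R)(w := 1))"
    by (rule colouring3_upd) (use w(1) nbrs in auto)
  moreover have "{v\<in>V. ((swap12 c0 ?R)(w := 1)) v = 3} \<subseteq> {v\<in>V. c0 v = 3} - {w}"
  proof (clarsimp split: if_splits)
    fix v assume "v \<in> V" "v \<noteq> w" "swap12 c0 ?R v = 3"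
    then show "c0 v = 3" using kempe_component_colours(2)[of v w] unfolding swap12_def
      by (auto split: if_splits)
  qed
  ultimately show False using colour3_class_cannot_shrink w by blast
qed

lemma kempe_path_exists:
  assumes "w \<in> V" "c0 w = 3"
  shows "\<exists>p n. kempe_path c0 w p n"
proof -
  obtain a b n where ab: "adj E w a" "c0 a = 1" "adj E w b" "c0 b = 2" "(kempe_edge ^^ n) a b"
    using kempe_component_meets_colour_2[OF assms] unfolding kempe_component_def rtranclp_power
    by blast
  then obtain p where p: "p 0 = a" "p n = b" "\<forall>i<n. kempe_edge (p i) (p (Suc i))"
    unfolding relpowp_fun_conv by blast
  have "c0 (p i) \<noteq> 3" if "i \<le> n" for i
    using that p ab(4) unfolding kempe_edge_def by (cases "i = n") auto
  then have "kempe_path c0 w p n"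
    using p ab unfolding kempe_path_def kempe_edge_def by auto
  then show ?thesis by blast
qed

end

section \<open>Shortest Kempe paths\<close>

locale shortest_kempe_path = min_colouring3 +
  fixes w :: 'a
  assumes w_in_V: "w \<in> V" and colour_w: "c0 w = 3"
begin

definition len :: nat where
  "len = (LEAST n. \<exists>p. kempe_path c0 w p n)"

definition path :: "nat \<Rightarrow> 'a" where
  "path = (SOME p. kempe_path c0 w p len)"

lemma kempe_path_path: "kempe_path c0 w path len"
proof -
  have "\<exists>n p. kempe_path c0 w p n" using kempe_path_exists[OF w_in_V colour_w] by blast
  then have "\<exists>p. kempe_path c0 w p len" unfolding len_def by (rule LeastI_ex)
  then show ?thesis unfolding path_def by (rule someI_ex)
qed

lemma len_le: "kempe_path c0 w p n \<Longrightarrow> len \<le> n"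
  unfolding len_def by (rule Least_le) blast

lemma path_colour: "i \<le> len \<Longrightarrow> path i \<in> V \<and> c0 (path i) = (if even i then 1 else 2)"
proof (induction i)
  case 0
  then show ?case using kempe_path_path adj_in_V unfolding kempe_path_def by auto
next
  case (Suc i)
  then have IH: "path i \<in> V" "c0 (path i) = (if even i then 1 else 2)" by auto
  have edge: "adj E (path i) (path (Suc i))" "c0 (path (Suc i)) \<noteq> 3"
    using kempe_path_path Suc.prems unfolding kempe_path_def by auto
  then have "path (Suc i) \<in> V" using adj_in_V by blast
  moreover have "c0 (path (Suc i)) \<noteq> c0 (path i)" using colouring3_adj[OF colouring3_c0 edge(1)] by simp
  ultimately show ?case using colouring3_range[OF colouring3_c0] edge(2) IH by fastforce
qed

lemma path_adj: "i < len \<Longrightarrow> j = Suc i \<Longrightarrow> adj E (path i) (path j)"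
  using kempe_path_path unfolding kempe_path_def by blast

lemma adj_w_path_0: "adj E w (path 0)"
  and adj_w_path_len: "adj E w (path len)"
  using kempe_path_path unfolding kempe_path_def by auto

lemma odd_len: "odd len"
  using kempe_path_path path_colour[of len] unfolding kempe_path_def by auto

lemma path_neq_w: "i \<le> len \<Longrightarrow> path i \<noteq> w" "i \<le> len \<Longrightarrow> w \<noteq> path i"
  using path_colour[of i] colour_w by (auto split: if_splits)

lemma not_adj_w_path:
  assumes "0 < i" "i < len"
  shows "\<not> adj E w (path i)"
proof
  assume adj: "adj E w (path i)"
  have "kempe_path c0 w (\<lambda>k. path (k + i)) (len - i)" if "even i"
    using kempe_path_suffix[OF kempe_path_path _ adj] path_colour[of i] that assms by auto
  moreover have "kempe_path c0 w path i" if "odd i"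
    using kempe_path_prefix[OF kempe_path_path _ adj] path_colour[of i] that assms by auto
  ultimately show False using len_le assms by (cases "even i") fastforce+
qed

lemma not_adj_path:
  assumes "i + 2 \<le> j" "j \<le> len"
  shows "\<not> adj E (path i) (path j)"
proof
  assume "adj E (path i) (path j)"
  from kempe_path_shortcut[OF kempe_path_path _ assms(2) this] assms
  show False using len_le by fastforce
qed

lemma path_inj:
  assumes "i < j" "j \<le> len"
  shows "path i \<noteq> path j"
proof
  assume eq: "path i = path j"
  show False
  proof (cases "j = len")
    case True
    then have "kempe_path c0 w path i"
      using kempe_path_prefix[OF kempe_path_path] eq adj_w_path_len path_colour[of len] odd_len assms
      by auto
    then show False using len_le assms by fastforce
  next
    case False
    then have "adj E (path i) (path (Suc j))" using eq path_adj[of j] assms by simp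
    from kempe_path_shortcut[OF kempe_path_path _ _ this] assms False
    show False using len_le by fastforce
  qed
qed

lemma path_eq_iff: "i \<le> len \<Longrightarrow> j \<le> len \<Longrightarrow> path i = path j \<longleftrightarrow> i = j"
  using path_inj by (metis linorder_neqE_nat)

lemma len_ge_3: "3 \<le> len"
proof -
  have "len \<noteq> 1"
    using no_triangle[OF adj_w_path_0 path_adj[of 0 1]] adj_w_path_len by auto
  moreover have "len \<noteq> 0" "len \<noteq> 2" using odd_len odd_pos[OF odd_len] by auto
  ultimately show ?thesis by linarith
qed

text \<open>The cycle \<open>w, path 0, \<dots>, path len\<close> is coloured \<open>3, 1, 2, \<dots>, 1, 2\<close>. If \<open>path 2\<close> has a
  neighbour of colour 3, the vertices \<open>path 0\<close>, \<open>path 2\<close>, \<open>path len\<close> are forced; otherwise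
  \<open>path 2\<close> is recoloured to 3 and \<open>path 0\<close>, \<open>path 3\<close>, \<open>path len\<close> are forced.\<close>
lemma forced_triple_if_len_ge_5:
  assumes "5 \<le> len"
  shows forced_triple
proof -
  define p0 p1 p2 p3 p4 q r where defs: "p0 = path 0" "p1 = path 1" "p2 = path 2" "p3 = path 3"
    "p4 = path 4" "q = path (len - 1)" "r = path len"
  have colours: "c0 p0 = 1" "c0 p1 = 2" "c0 p2 = 1" "c0 p4 = 1" "c0 q = 1" "c0 r = 2"
    using path_colour[of 0] path_colour[of 1] path_colour[of 2] path_colour[of 4]
      path_colour[of "len - 1"] path_colour[of len] assms odd_len unfolding defs by auto
  have adj: "adj E p0 w" "adj E p0 p1" "adj E p2 p1" "adj E p3 p2" "adj E p3 p4" "adj E r w"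
    "adj E r q"
    using adj_sym[OF adj_w_path_0] adj_sym[OF adj_w_path_len] path_adj[of 0 1]
      adj_sym[OF path_adj[of 1 2]] adj_sym[OF path_adj[of 2 3]] path_adj[of 3 4]
      adj_sym[OF path_adj[of "len - 1" len]] assms unfolding defs by simp_all
  have "distinct [w, p0, p1, p2, p3, p4, r]" "p2 \<noteq> q"
    using assms unfolding defs by (simp_all add: path_eq_iff path_neq_w)
  then have distinct: "w \<noteq> p0" "w \<noteq> p1" "w \<noteq> p2" "w \<noteq> p3" "w \<noteq> p4" "w \<noteq> r"
    "p0 \<noteq> p2" "p0 \<noteq> p3" "p0 \<noteq> r" "p1 \<noteq> p2" "p1 \<noteq> p3" "p1 \<noteq> r" "p2 \<noteq> p4" "p2 \<noteq> q"
    "p2 \<noteq> r" "p3 \<noteq> r" "p4 \<noteq> r"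
    by auto
  note facts = colours adj distinct distinct[symmetric] colour_w
  show ?thesis
  proof (cases "\<exists>u. adj E p2 u \<and> c0 u = 3")
    case True
    then obtain u where u: "adj E p2 u" "c0 u = 3" by blast
    then have "u \<noteq> r" using colours by auto
    with u show ?thesis
      by (intro forced_tripleI[OF colouring3_c0, of p0 p2 r w p1 p1 u w q]) (simp_all add: facts)
  next
    case False
    let ?c = "c0(p2 := 3)"
    have "colouring3 ?c"
      using False adj(3) adj_in_V by (intro colouring3_recolour_to_3) auto
    then show ?thesis
      by (rule forced_tripleI[of ?c p0 p3 r w p1 p2 p4 w q]) (simp_all add: facts)
  qed
qed

end

section \<open>Induced pentagons\<close>

locale colour3_pentagon = min_colouring3 +
  fixes w a0 a1 a2 a3 :: 'a
  assumes colours: "c0 w = 3" "c0 a0 = 1" "c0 a1 = 2" "c0 a2 = 1" "c0 a3 = 2"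
    and edges: "adj E w a0" "adj E a0 a1" "adj E a1 a2" "adj E a2 a3" "adj E a3 w"
    and non_edges: "\<not> adj E w a1" "\<not> adj E w a2" "\<not> adj E a0 a2" "\<not> adj E a1 a3"
begin

lemma non_edge_a0_a3: "\<not> adj E a0 a3"
  using no_triangle[OF edges(1) _ adj_sym[OF edges(5)]] by blast

lemmas edges_sym = edges[THEN adj_sym]

lemma non_edges_sym: "\<not> adj E a1 w" "\<not> adj E a2 w" "\<not> adj E a2 a0" "\<not> adj E a3 a1"
  "\<not> adj E a0 a3" "\<not> adj E a3 a0"
  using non_edges non_edge_a0_a3 by (simp_all add: adj_commute)

lemma pentagon_in_V: "w \<in> V" "a0 \<in> V" "a1 \<in> V" "a2 \<in> V" "a3 \<in> V"
  using edges adj_in_V by blast+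

lemma pentagon_neq: "w \<noteq> a0" "w \<noteq> a1" "w \<noteq> a2" "w \<noteq> a3" "a0 \<noteq> a1" "a0 \<noteq> a2"
  "a0 \<noteq> a3" "a1 \<noteq> a2" "a1 \<noteq> a3" "a2 \<noteq> a3"
  using colours edges edges_sym non_edges by auto

lemmas pentagon_simps = colours edges edges_sym non_edges non_edges_sym pentagon_neq pentagon_neq[symmetric]

text \<open>Reversing the cycle and swapping colours 1 and 2 preserves the configuration; this halves
  the case analysis below.\<close>
lemma pentagon_mirror: "colour3_pentagon V E (swap12 c0 {v\<in>V. c0 v \<noteq> 3}) w a3 a2 a1 a0"
  by (intro colour3_pentagon.intro min_colouring3_swap12 colour3_pentagon_axioms.intro)
    (simp_all add: pentagon_simps pentagon_in_V swap12_def)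

lemma forced_triple_if_colour3_adj_a0_a2:
  assumes "c0 u = 3" "adj E u a0" "adj E u a2"
  shows forced_triple
proof -
  have "u \<noteq> a3" using assms(1) colours by auto
  then show ?thesis
    using adj_sym[OF assms(3)]
    by (intro forced_tripleI[OF colouring3_c0, of a0 a2 a3 w a1 a1 u w a2]) (simp_all add: pentagon_simps assms)
qed

lemma forced_triple_if_two_colour3:
  assumes W: "{v\<in>V. c0 v = 3} = {w, u}" and "u \<noteq> w"
  shows forced_triple
proof -
  have u: "u \<in> V" "c0 u = 3" using W by auto
  obtain x y where xy: "adj E u x" "c0 x = 1" "adj E u y" "c0 y = 2"
    using colour3_vertex_sees_1_and_2[OF u] by blast
  have u_neq: "u \<noteq> a0" "u \<noteq> a1" "u \<noteq> a2" "u \<noteq> a3" using u(2) colours by auto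
  have "\<not> (adj E u a0 \<and> adj E u a1)" "\<not> (adj E u a2 \<and> adj E u a3)"
    using no_triangle[of u a0 a1] no_triangle[of u a2 a3] edges by blast+
  then consider "\<not> adj E u a0" "\<not> adj E u a3" | "\<not> adj E u a1" "\<not> adj E u a2"
    | "adj E u a0" "adj E u a2" | "adj E u a3" "adj E u a1"
    by blast
  then show ?thesis
  proof cases
    case 1
    then have "x \<noteq> a0" "x \<noteq> a3" "y \<noteq> a0" "y \<noteq> a3" using xy by auto
    then show ?thesis
      using xy u_neq \<open>u \<noteq> w\<close>
      by (intro forced_tripleI[OF colouring3_c0, of a0 a3 u w a1 w a2 x y]) (simp_all add: pentagon_simps)
  next
    case 2
    have "\<forall>v\<in>{v\<in>V. c0 v = 3}. \<not> adj E a2 v"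
      unfolding W using non_edges_sym 2 by (simp add: adj_commute)
    then have "colouring3 (c0(a2 := 3))" using pentagon_in_V by (intro colouring3_recolour_to_3)
    moreover have "x \<noteq> a1" "x \<noteq> a2" "y \<noteq> a1" "y \<noteq> a2" using xy 2 by auto
    ultimately show ?thesis
      using xy u_neq \<open>u \<noteq> w\<close>
      by (intro forced_tripleI[of "c0(a2 := 3)" w u a1 a0 a3 x y a0 a2]) (simp_all add: pentagon_simps)
  next
    case 3
    show ?thesis using u(2) 3 by (rule forced_triple_if_colour3_adj_a0_a2)
  next
    case 4
    interpret mirror: colour3_pentagon V E "swap12 c0 {v\<in>V. c0 v \<noteq> 3}" w a3 a2 a1 a0
      by (rule pentagon_mirror)
    show ?thesis
      using 4 u by (intro mirror.forced_triple_if_colour3_adj_a0_a2) (simp_all add: swap12_def)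
  qed
qed

lemma forced_triple_if_outer_neighbour_a0:
  assumes W: "{v\<in>V. c0 v = 3} = {w}" and z: "adj E z a0" "z \<notin> {w, a0, a1, a2, a3}"
  shows forced_triple
proof -
  have "c0 z \<noteq> 3" using W z adj_in_V by blast
  then have "c0 z = 2"
    using colouring3_range[OF colouring3_c0 adj_in_V(1)[OF z(1)]] colouring3_adj[OF colouring3_c0 z(1)]
      colours by auto
  moreover have "\<forall>u\<in>{v\<in>V. c0 v = 3}. \<not> adj E a1 u" unfolding W using non_edges_sym by simp
  then have "colouring3 (c0(a1 := 3))" using pentagon_in_V by (intro colouring3_recolour_to_3)
  ultimately show ?thesis
    using z adj_sym[OF z(1)]
    by (intro forced_tripleI[of "c0(a1 := 3)" a2 a0 w a1 a3 a1 z a0 a3]) (simp_all add: pentagon_simps)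
qed

lemma forced_triple_if_outer_neighbour_a1:
  assumes W: "{v\<in>V. c0 v = 3} = {w}" and z: "adj E z a1" "z \<notin> {w, a0, a1, a2, a3}"
  shows forced_triple
proof -
  have "c0 z \<noteq> 3" using W z adj_in_V by blast
  then have "c0 z = 1"
    using colouring3_range[OF colouring3_c0 adj_in_V(1)[OF z(1)]] colouring3_adj[OF colouring3_c0 z(1)]
      colours by auto
  show ?thesis
  proof (cases "adj E z w")
    case True
    then show ?thesis
      using z \<open>c0 z = 1\<close>
      by (intro forced_tripleI[OF colouring3_c0, of z a0 a3 w a1 w a1 w a2]) (simp_all add: pentagon_simps)
  next
    case False
    have "\<forall>u\<in>{v\<in>V. c0 v = 3}. \<not> adj E z u" unfolding W using False by simp
    then have "colouring3 (c0(z := 3))"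
      using adj_in_V(1)[OF z(1)] by (intro colouring3_recolour_to_3)
    then show ?thesis
      using z adj_sym[OF z(1)]
      by (intro forced_tripleI[of "c0(z := 3)" a1 a0 a3 a2 z w a1 w a2]) (auto simp: pentagon_simps)
  qed
qed

lemma forced_triple_if_outer_neighbour_w:
  assumes W: "{v\<in>V. c0 v = 3} = {w}" and z: "adj E w z" "z \<notin> {w, a0, a1, a2, a3}" "c0 z = 2"
    and a3_nbrs: "\<And>u. adj E a3 u \<Longrightarrow> u = w \<or> u = a2"
  shows forced_triple
proof -
  have "\<forall>u\<in>{v\<in>V. c0 v = 3}. \<not> adj E a2 u" unfolding W using non_edges_sym by simp
  then have "colouring3 (c0(a2 := 3))" using pentagon_in_V by (intro colouring3_recolour_to_3)
  then have "colouring3 (c0(a2 := 3, a3 := 1))"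
  proof (rule colouring3_upd)
    fix u assume "adj E a3 u"
    then have "u = w \<or> u = a2" by (rule a3_nbrs)
    then show "(c0(a2 := 3)) u \<noteq> 1" using colours by auto
  qed (use pentagon_in_V in auto)
  then show ?thesis
    using z adj_sym[OF z(1)]
    by (intro forced_tripleI[of "c0(a2 := 3, a3 := 1)" a2 w a0 a1 a3 z a3 w a1]) (simp_all add: pentagon_simps)
qed

end

lemma C5_E_eq: "C5_E = {{0, 1}, {1, 2}, {2, 3}, {3, 4}, {4, 0}}"
proof -
  have "C5_E = (\<lambda>i. {i, (i + 1) mod 5}) ` {..<5}" unfolding C5_E_def by auto
  also have "{..<5::nat} = {0, 1, 2, 3, 4}" by auto
  finally show ?thesis by (simp add: insert_commute numeral_2_eq_2)
qed

lemma graph_iso_C5I: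
  assumes V: "V = {a0, a1, a2, a3, a4}" and "distinct [a0, a1, a2, a3, a4]"
    and "{a0, a1} \<in> E" "{a1, a2} \<in> E" "{a2, a3} \<in> E" "{a3, a4} \<in> E" "{a4, a0} \<in> E"
    and "{a0, a2} \<notin> E" "{a0, a3} \<notin> E" "{a1, a3} \<notin> E" "{a1, a4} \<notin> E" "{a2, a4} \<notin> E"
    and "\<And>x. {x} \<notin> E"
  shows "graph_iso V E C5_V C5_E"
proof -
  define f where "f v = (if v = a0 then 0 else if v = a1 then 1 else if v = a2 then 2
     else if v = a3 then 3 else (4::nat))" for v
  have f: "f a0 = 0" "f a1 = 1" "f a2 = 2" "f a3 = 3" "f a4 = 4" using assms(2) unfolding f_def by auto
  have "bij_betw f V C5_V"
  proof (rule bij_betw_imageI)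
    show "inj_on f V" unfolding V inj_on_def using f assms(2) by auto
    have "{0..<5::nat} = {0, 1, 2, 3, 4}" by auto
    then show "f ` V = C5_V" unfolding V C5_V_def using f by auto
  qed
  moreover have "\<forall>u\<in>V. \<forall>v\<in>V. {u, v} \<in> E \<longleftrightarrow> {f u, f v} \<in> C5_E"
    using assms(3-) unfolding V C5_E_eq by (simp add: f insert_commute doubleton_eq_iff)
  ultimately show ?thesis unfolding graph_iso_def by blast
qed

context colour3_pentagon
begin

lemma pentagon_graph_iso:
  assumes "V = {w, a0, a1, a2, a3}"
  shows "graph_iso V E C5_V C5_E"
proof (rule graph_iso_C5I[OF assms])
  show "distinct [w, a0, a1, a2, a3]" using pentagon_neq by simp
  show "{w, a0} \<in> E" "{a0, a1} \<in> E" "{a1, a2} \<in> E" "{a2, a3} \<in> E" "{a3, w} \<in> E"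
    using edges unfolding adj_def .
  show "{w, a1} \<notin> E" "{w, a2} \<notin> E" "{a0, a2} \<notin> E" "{a0, a3} \<notin> E" "{a1, a3} \<notin> E"
    using non_edges non_edge_a0_a3 unfolding adj_def by simp_all
  show "{x} \<notin> E" for x using adj_neq[of x x] unfolding adj_def by auto
qed

lemma forced_triple_if_outer_neighbour:
  assumes W: "{v\<in>V. c0 v = 3} = {w}" and z: "z \<notin> {w, a0, a1, a2, a3}"
    and "adj E z a0 \<or> adj E z a1 \<or> adj E z a2 \<or> adj E z a3"
  shows forced_triple
proof -
  interpret mirror: colour3_pentagon V E "swap12 c0 {v\<in>V. c0 v \<noteq> 3}" w a3 a2 a1 a0
    by (rule pentagon_mirror)
  have W': "{v\<in>V. swap12 c0 {v\<in>V. c0 v \<noteq> 3} v = 3} = {w}" using W colour3_class_swap12 by simp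
  have z': "z \<notin> {w, a3, a2, a1, a0}" using z by auto
  show ?thesis
    using assms(3) forced_triple_if_outer_neighbour_a0[OF W _ z] forced_triple_if_outer_neighbour_a1[OF W _ z]
      mirror.forced_triple_if_outer_neighbour_a0[OF W' _ z'] mirror.forced_triple_if_outer_neighbour_a1[OF W' _ z']
    by blast
qed

lemma forced_triple_if_outer_neighbour_only_at_w:
  assumes W: "{v\<in>V. c0 v = 3} = {w}" and z: "adj E w z" "z \<notin> {w, a0, a1, a2, a3}"
    and no_outer: "\<And>u. u \<notin> {w, a0, a1, a2, a3} \<Longrightarrow>
      \<not> adj E u a0 \<and> \<not> adj E u a1 \<and> \<not> adj E u a2 \<and> \<not> adj E u a3"
  shows forced_triple
proof -
  have "z \<in> V" using adj_in_V(2)[OF z(1)] .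
  then have "c0 z \<noteq> 3" using W z(2) by blast
  then have "c0 z = 1 \<or> c0 z = 2" using colouring3_range[OF colouring3_c0 \<open>z \<in> V\<close>] by blast
  have nbrs_a3: "u = w \<or> u = a2" if "adj E a3 u" for u
  proof (rule ccontr)
    assume "\<not> (u = w \<or> u = a2)"
    moreover have "u \<noteq> a0" "u \<noteq> a1" "u \<noteq> a3" using that non_edges_sym adj_neq by auto
    ultimately show False using no_outer[of u] adj_sym[OF that] by auto
  qed
  have nbrs_a0: "u = w \<or> u = a1" if "adj E a0 u" for u
  proof (rule ccontr)
    assume "\<not> (u = w \<or> u = a1)"
    moreover have "u \<noteq> a0" "u \<noteq> a2" "u \<noteq> a3" using that non_edges non_edge_a0_a3 adj_neq by auto
    ultimately show False using no_outer[of u] adj_sym[OF that] by auto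
  qed
  interpret mirror: colour3_pentagon V E "swap12 c0 {v\<in>V. c0 v \<noteq> 3}" w a3 a2 a1 a0
    by (rule pentagon_mirror)
  have W': "{v\<in>V. swap12 c0 {v\<in>V. c0 v \<noteq> 3} v = 3} = {w}" using W colour3_class_swap12 by simp
  show ?thesis
    using \<open>c0 z = 1 \<or> c0 z = 2\<close>
  proof
    assume "c0 z = 1"
    then have "swap12 c0 {v\<in>V. c0 v \<noteq> 3} z = 2" using \<open>z \<in> V\<close> unfolding swap12_def by simp
    then show ?thesis using mirror.forced_triple_if_outer_neighbour_w[OF W' _ _ _ nbrs_a0] z by auto
  next
    assume "c0 z = 2"
    then show ?thesis using forced_triple_if_outer_neighbour_w[OF W _ _ _ nbrs_a3] z by auto
  qed
qed

lemma forced_triple_or_C5_if_one_colour3: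
  assumes conn: "connected_graph V E" and W: "{v\<in>V. c0 v = 3} = {w}"
  shows "forced_triple \<or> graph_iso V E C5_V C5_E"
proof -
  let ?C = "{w, a0, a1, a2, a3}"
  consider "V = ?C"
    | "\<exists>z. z \<notin> ?C \<and> (adj E z a0 \<or> adj E z a1 \<or> adj E z a2 \<or> adj E z a3)"
    | "V \<noteq> ?C" "\<And>u. u \<notin> ?C \<Longrightarrow> \<not> adj E u a0 \<and> \<not> adj E u a1 \<and> \<not> adj E u a2 \<and> \<not> adj E u a3"
    by blast
  then show ?thesis
  proof cases
    case 1
    then show ?thesis using pentagon_graph_iso by blast
  next
    case 2
    then show ?thesis using forced_triple_if_outer_neighbour[OF W] by blast
  next
    case 3
    have "?C \<subseteq> V" using pentagon_in_V by blast
    then obtain y where "y \<in> V - ?C" using 3(1) by blast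
    then obtain x z where xz: "x \<in> ?C" "z \<notin> ?C" "adj E x z"
      using connected_graph_edge_leaving[OF conn insertI1 \<open>?C \<subseteq> V\<close>] by blast
    then have "x = w" using 3(2)[OF xz(2)] adj_sym[OF xz(3)] by auto
    then show ?thesis using forced_triple_if_outer_neighbour_only_at_w[OF W _ xz(2) 3(2)] xz(3) by blast
  qed
qed

lemma forced_triple_or_C5_if_few_colour3:
  assumes conn: "connected_graph V E" and few: "card {v\<in>V. c0 v = 3} \<le> 2"
  shows "forced_triple \<or> graph_iso V E C5_V C5_E"
proof -
  let ?W = "{v\<in>V. c0 v = 3}"
  have "w \<in> ?W" using colours pentagon_in_V by simp
  moreover have "finite ?W" using finite_V by simp
  ultimately have "card ?W \<noteq> 0" by auto
  then have "card ?W = 1 \<or> card ?W = 2" using few by linarith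
  then show ?thesis
  proof
    assume "card ?W = 1"
    then obtain x where "?W = {x}" using card_1_singleton_iff[of ?W] by auto
    then have "?W = {w}" using \<open>w \<in> ?W\<close> by auto
    then show ?thesis using forced_triple_or_C5_if_one_colour3[OF conn] by blast
  next
    assume "card ?W = 2"
    then obtain u where "?W = {w, u}" "u \<noteq> w"
      using \<open>w \<in> ?W\<close> card_2_iff[of ?W] by (metis doubleton_eq_iff insertE singletonD)
    then show ?thesis using forced_triple_if_two_colour3 by blast
  qed
qed

end

lemma (in shortest_kempe_path) pentagon_if_len_3:
  assumes "len = 3"
  shows "colour3_pentagon V E c0 w (path 0) (path 1) (path 2) (path 3)"
proof (intro colour3_pentagon.intro colour3_pentagon_axioms.intro)
  show "min_colouring3 V E c0" by (rule min_colouring3_axioms)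
  show "c0 w = 3" by (rule colour_w)
  show "c0 (path 0) = 1" "c0 (path 1) = 2" "c0 (path 2) = 1" "c0 (path 3) = 2"
    using path_colour[of 0] path_colour[of 1] path_colour[of 2] path_colour[of 3] assms by auto
  show "adj E w (path 0)" by (rule adj_w_path_0)
  show "adj E (path 0) (path 1)" "adj E (path 1) (path 2)" "adj E (path 2) (path 3)"
    by (rule path_adj; simp add: assms)+
  show "adj E (path 3) w" using adj_sym[OF adj_w_path_len] by (simp add: assms)
  show "\<not> adj E w (path 1)" "\<not> adj E w (path 2)" by (rule not_adj_w_path; simp add: assms)+
  show "\<not> adj E (path 0) (path 2)" "\<not> adj E (path 1) (path 3)" by (rule not_adj_path; simp add: assms)+
qed

context min_colouring3
begin

lemma colour3_class_nonempty: "{v\<in>V. c0 v = 3} \<noteq> {}"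
proof
  assume no3: "{v\<in>V. c0 v = 3} = {}"
  have "c0 \<in> V \<rightarrow>\<^sub>E {1..2}"
    using colouring3_c0 colouring3_range[OF colouring3_c0] no3
    unfolding proper_colouring_def by (fastforce simp: PiE_iff)
  then have "proper_colouring V E 2 c0"
    using colouring3_c0 unfolding proper_colouring_def by blast
  then show False using not_2_colourable by blast
qed

lemma forced_triple_if_three_colour3:
  assumes "3 \<le> card {v\<in>V. c0 v = 3}"
  shows forced_triple
proof -
  obtain U where "U \<subseteq> {v\<in>V. c0 v = 3}" "card U = 3"
    using obtain_subset_with_card_n[OF assms] by blast
  then obtain x y z where U: "U = {x, y, z}" "x \<noteq> y" "x \<noteq> z" "y \<noteq> z"
    and xyz: "x \<in> V" "c0 x = 3" "y \<in> V" "c0 y = 3" "z \<in> V" "c0 z = 3"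
    by (auto simp: card_3_iff)
  obtain x1 x2 where x: "adj E x x1" "c0 x1 = 1" "adj E x x2" "c0 x2 = 2"
    using colour3_vertex_sees_1_and_2 xyz(1,2) by blast
  obtain y1 y2 where y: "adj E y y1" "c0 y1 = 1" "adj E y y2" "c0 y2 = 2"
    using colour3_vertex_sees_1_and_2 xyz(3,4) by blast
  obtain z1 z2 where z: "adj E z z1" "c0 z1 = 1" "adj E z z2" "c0 z2 = 2"
    using colour3_vertex_sees_1_and_2 xyz(5,6) by blast
  show ?thesis
    by (rule forced_tripleI[OF colouring3_c0 U(2-4) x(1,3) _ _ _ y(1,3) _ _ _ z(1,3)])
      (use x y z xyz in auto)
qed

lemma forced_triple_or_C5:
  assumes "connected_graph V E"
  shows "forced_triple \<or> graph_iso V E C5_V C5_E"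
proof (cases "3 \<le> card {v\<in>V. c0 v = 3}")
  case True
  then show ?thesis using forced_triple_if_three_colour3[OF True] by blast
next
  case False
  obtain w where "w \<in> V" "c0 w = 3" using colour3_class_nonempty by auto
  then interpret shortest_kempe_path V E c0 w by unfold_locales
  have "len \<noteq> 4" using odd_len by auto
  then have "len = 3 \<or> 5 \<le> len" using len_ge_3 by linarith
  then show ?thesis
  proof
    assume "len = 3"
    then interpret colour3_pentagon V E c0 w "path 0" "path 1" "path 2" "path 3"
      by (rule pentagon_if_len_3)
    show ?thesis using forced_triple_or_C5_if_few_colour3 assms False by simp
  next
    assume "5 \<le> len"
    then show ?thesis using forced_triple_if_len_ge_5 by simp
  qed
qed

end

section \<open>Colourings of the pentagon \<open>C\<^sub>5\<close>\<close>

lemma subset_doubleton_if_card_le_2: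
  assumes "finite S" "card S \<le> 2" "S \<subseteq> A" "a \<in> A"
  shows "\<exists>x\<in>A. \<exists>y\<in>A. S \<subseteq> {x, y}"
proof -
  have "card S = 0 \<or> card S = 1 \<or> card S = 2" using assms(2) by linarith
  then consider "S = {}" | x where "S = {x}" | x y where "S = {x, y}"
    using assms(1) by (auto simp: card_1_singleton_iff card_2_iff)
  then show ?thesis using assms(3,4) by cases auto
qed

lemma proper_colouring_C5_iff:
  "proper_colouring C5_V C5_E k t \<longleftrightarrow>
     t \<in> C5_V \<rightarrow>\<^sub>E {1..k} \<and> t 0 \<noteq> t 1 \<and> t 1 \<noteq> t 2 \<and> t 2 \<noteq> t 3 \<and> t 3 \<noteq> t 4 \<and> t 4 \<noteq> t 0"
proof -
  have edges: "adj C5_E 0 1" "adj C5_E 1 2" "adj C5_E 2 3" "adj C5_E 3 4" "adj C5_E 4 0"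
    unfolding adj_def C5_E_eq by auto
  have "(\<forall>u\<in>C5_V. \<forall>v\<in>C5_V. adj C5_E u v \<longrightarrow> t u \<noteq> t v) \<longleftrightarrow>
    t 0 \<noteq> t 1 \<and> t 1 \<noteq> t 2 \<and> t 2 \<noteq> t 3 \<and> t 3 \<noteq> t 4 \<and> t 4 \<noteq> t 0"
  proof
    assume "\<forall>u\<in>C5_V. \<forall>v\<in>C5_V. adj C5_E u v \<longrightarrow> t u \<noteq> t v"
    then show "t 0 \<noteq> t 1 \<and> t 1 \<noteq> t 2 \<and> t 2 \<noteq> t 3 \<and> t 3 \<noteq> t 4 \<and> t 4 \<noteq> t 0"
      using edges unfolding C5_V_def by simp
  next
    assume "t 0 \<noteq> t 1 \<and> t 1 \<noteq> t 2 \<and> t 2 \<noteq> t 3 \<and> t 3 \<noteq> t 4 \<and> t 4 \<noteq> t 0"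
    then show "\<forall>u\<in>C5_V. \<forall>v\<in>C5_V. adj C5_E u v \<longrightarrow> t u \<noteq> t v"
      unfolding adj_def C5_E_eq by (auto simp: doubleton_eq_iff)
  qed
  then show ?thesis unfolding proper_colouring_def by blast
qed

definition C5_colourings :: "nat list list" where
  "C5_colourings = filter (\<lambda>ys. ys ! 0 \<noteq> ys ! 1 \<and> ys ! 1 \<noteq> ys ! 2 \<and> ys ! 2 \<noteq> ys ! 3 \<and>
     ys ! 3 \<noteq> ys ! 4 \<and> ys ! 4 \<noteq> ys ! 0) (List.n_lists 5 [1, 2, 3])"

lemma C5_colourings_not_fixed_by_two:
  "list_all (\<lambda>ys. list_all (\<lambda>i. list_all (\<lambda>j.
     list_ex (\<lambda>zs. zs \<noteq> ys \<and> zs ! i = ys ! i \<and> zs ! j = ys ! j) C5_colourings) [0..<5]) [0..<5])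
   C5_colourings"
  by code_simp

lemma C5_colouring_in_C5_colourings:
  assumes "proper_colouring C5_V C5_E 3 t"
  shows "map t [0..<5] \<in> set C5_colourings"
proof -
  have "t \<in> C5_V \<rightarrow>\<^sub>E {1..3}" using assms unfolding proper_colouring_C5_iff by blast
  then have "t k \<in> {1, 2, 3}" if "k < 5" for k
  proof -
    have "1 \<le> t k" "t k \<le> 3" using \<open>t \<in> C5_V \<rightarrow>\<^sub>E {1..3}\<close> that unfolding C5_V_def by auto
    then show ?thesis by auto
  qed
  then have "set (map t [0..<5]) \<subseteq> set [1, 2, 3]" by (auto simp only: set_map set_upt) auto
  then show ?thesis
    using assms unfolding proper_colouring_C5_iff C5_colourings_def by (simp add: set_n_lists numeral_2_eq_2)
qed

lemma C5_colourings_proper: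
  assumes "zs \<in> set C5_colourings"
  shows "proper_colouring C5_V C5_E 3 (restrict (\<lambda>k. zs ! k) C5_V)"
proof -
  have "length zs = 5" "set zs \<subseteq> {1, 2, 3}"
    using assms unfolding C5_colourings_def by (auto simp: set_n_lists)
  then have "zs ! k \<in> {1..3}" if "k < 5" for k
  proof -
    have "zs ! k \<in> set zs" using that \<open>length zs = 5\<close> by simp
    then show ?thesis using \<open>set zs \<subseteq> {1, 2, 3}\<close> by auto
  qed
  then show ?thesis
    using assms unfolding proper_colouring_C5_iff C5_colourings_def by (auto simp: C5_V_def)
qed

lemma C5_colouring_not_determined_by_two:
  assumes t: "proper_colouring C5_V C5_E 3 t" and "S \<subseteq> C5_V" "card S \<le> 2"
  shows "\<exists>t'. proper_colouring C5_V C5_E 3 t' \<and> t' \<noteq> t \<and> (\<forall>s\<in>S. t' s = t s)"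
proof -
  have "finite S" using assms(2) unfolding C5_V_def by (rule finite_subset) simp
  then obtain i j where ij: "i \<in> C5_V" "j \<in> C5_V" "S \<subseteq> {i, j}"
    using subset_doubleton_if_card_le_2[OF _ assms(3,2), of 0] unfolding C5_V_def by auto
  let ?ys = "map t [0..<5]"
  have "i \<in> set [0..<5]" "j \<in> set [0..<5]" using ij unfolding C5_V_def by simp_all
  then obtain zs where zs: "zs \<in> set C5_colourings" "zs \<noteq> ?ys" "zs ! i = ?ys ! i" "zs ! j = ?ys ! j"
    using C5_colourings_not_fixed_by_two[unfolded list_all_iff list_ex_iff, rule_format,
        OF C5_colouring_in_C5_colourings[OF t]]
    by blast
  have "length zs = 5" using zs(1) unfolding C5_colourings_def by (auto simp: set_n_lists)
  have "\<exists>k<5. zs ! k \<noteq> t k"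
  proof (rule ccontr)
    assume "\<not> (\<exists>k<5. zs ! k \<noteq> t k)"
    then have "zs = map t [0..<5]" using \<open>length zs = 5\<close> by (intro nth_equalityI) auto
    then show False using zs(2) by blast
  qed
  then obtain k where k: "k < 5" "zs ! k \<noteq> t k" by blast
  let ?t' = "restrict (\<lambda>k. zs ! k) C5_V"
  have "?t' \<noteq> t"
  proof
    assume "?t' = t"
    then have "?t' k = t k" by simp
    then show False using k unfolding C5_V_def by simp
  qed
  moreover have "\<forall>s\<in>S. ?t' s = t s" using zs(3,4) ij assms(2) unfolding C5_V_def by auto
  ultimately show ?thesis using C5_colourings_proper[OF zs(1)] by blast
qed

context triangle_free_3_chromatic
begin

context
  fixes f :: "'a \<Rightarrow> nat"
  assumes f_bij: "bij_betw f V C5_V"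
    and f_adj: "\<And>u v. u \<in> V \<Longrightarrow> v \<in> V \<Longrightarrow> adj E u v \<longleftrightarrow> adj C5_E (f u) (f v)"
begin

lemma adj_inv_into_iff:
  assumes "k \<in> C5_V" "l \<in> C5_V"
  shows "adj E (inv_into V f k) (inv_into V f l) \<longleftrightarrow> adj C5_E k l"
  using f_adj[of "inv_into V f k" "inv_into V f l"] assms
    bij_betw_inv_into_right[OF f_bij] inv_into_into[of _ f V] bij_betw_imp_surj_on[OF f_bij]
  by simp

lemma colouring3_of_C5_colouring:
  assumes "proper_colouring C5_V C5_E 3 t"
  shows "colouring3 (restrict (t \<circ> f) V)"
  using assms by (rule proper_colouring_pullback[rotated 2]) (use bij_betwE[OF f_bij] f_adj in auto)

lemma C5_colouring_of_colouring3:
  assumes "colouring3 c"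
  shows "proper_colouring C5_V C5_E 3 (restrict (c \<circ> inv_into V f) C5_V)"
  using assms
  by (rule proper_colouring_pullback[rotated 2])
    (use bij_betwE[OF bij_betw_inv_into[OF f_bij]] adj_inv_into_iff in auto)

lemma card_determining_set_ge_3_if_C5:
  assumes c: "colouring3 c" and det: "determining_set V E c S"
  shows "3 \<le> card S"
proof (rule ccontr)
  assume "\<not> 3 \<le> card S"
  let ?g = "inv_into V f"
  have S: "S \<subseteq> V" using det unfolding determining_set_def by blast
  then have "f ` S \<subseteq> C5_V" using bij_betwE[OF f_bij] by blast
  moreover have "card (f ` S) \<le> 2"
    using \<open>\<not> 3 \<le> card S\<close> card_image_le[OF finite_subset[OF S finite_V], of f] by linarith
  ultimately obtain t' where t': "proper_colouring C5_V C5_E 3 t'" "t' \<noteq> restrict (c \<circ> ?g) C5_V"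
    "\<forall>k\<in>f ` S. t' k = restrict (c \<circ> ?g) C5_V k"
    using C5_colouring_not_determined_by_two[OF C5_colouring_of_colouring3[OF c]] by blast
  let ?c' = "restrict (t' \<circ> f) V"
  have "?c' \<noteq> c"
  proof -
    have "\<exists>k\<in>C5_V. t' k \<noteq> c (?g k)"
    proof (rule ccontr)
      assume "\<not> (\<exists>k\<in>C5_V. t' k \<noteq> c (?g k))"
      then have "t' = restrict (c \<circ> ?g) C5_V"
        using t'(1) unfolding proper_colouring_def by (intro extensionalityI[of _ C5_V]) (auto simp: PiE_iff)
      then show False using t'(2) by blast
    qed
    then obtain k where "k \<in> C5_V" "t' k \<noteq> c (?g k)" by blast
    moreover have "?g k \<in> V" "f (?g k) = k"
      using bij_betwE[OF bij_betw_inv_into[OF f_bij]] bij_betw_inv_into_right[OF f_bij] \<open>k \<in> C5_V\<close>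
      by auto
    ultimately show ?thesis by (metis comp_apply restrict_apply')
  qed
  moreover have "\<forall>s\<in>S. ?c' s = c s"
    using t'(3) S bij_betw_inv_into_left[OF f_bij] bij_betwE[OF f_bij] by auto
  ultimately show False
    using colouring3_of_C5_colouring[OF t'(1)] det chromatic unfolding determining_set_def by auto
qed

lemma ex_determining_set_card_3_if_C5: "\<exists>c S. colouring3 c \<and> determining_set V E c S \<and> card S = 3"
proof -
  let ?g = "inv_into V f"
  define t where "t = restrict (\<lambda>k::nat. if k = 4 then 3 else if even k then 1 else 2 :: nat) C5_V"
  define c where "c = restrict (t \<circ> f) V"
  have "proper_colouring C5_V C5_E 3 t" unfolding proper_colouring_C5_iff t_def by (auto simp: C5_V_def)
  then have c: "colouring3 c" unfolding c_def by (rule colouring3_of_C5_colouring)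
  have g: "?g k \<in> V" "f (?g k) = k" if "k < 5" for k
    using bij_betwE[OF bij_betw_inv_into[OF f_bij]] bij_betw_inv_into_right[OF f_bij] that
    unfolding C5_V_def by auto
  have colour: "c (?g 1) = 2" "c (?g 2) = 1" "c (?g 4) = 3"
    using g[of 1] g[of 2] g[of 4] unfolding c_def t_def C5_V_def by simp_all
  have adj: "adj E (?g k) (?g l)" if "{k, l} \<in> C5_E" "k < 5" "l < 5" for k l
    using adj_inv_into_iff[of k l] that unfolding adj_def C5_V_def by simp
  have "{0, 1} \<in> C5_E" "{0, 4} \<in> C5_E" "{3, 2} \<in> C5_E" "{3, 4} \<in> C5_E"
    unfolding C5_E_eq by (simp_all add: insert_commute)
  then have a: "adj E (?g 0) (?g 1)" "adj E (?g 0) (?g 4)" "adj E (?g 3) (?g 2)" "adj E (?g 3) (?g 4)"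
    using adj by simp_all
  have inj: "?g k \<noteq> ?g l" if "k < 5" "l < 5" "k \<noteq> l" for k l
    using g that by metis
  let ?S = "V - {?g 0, ?g 3}"
  have "determining_set V E c ?S"
  proof (rule determining_setI)
    show "proper_colouring V E (chromatic_number V E) c" using c chromatic by simp
    fix c' assume c': "proper_colouring V E (chromatic_number V E) c'" and agree: "\<forall>s\<in>?S. c' s = c s"
    have c'3: "colouring3 c'" using c' chromatic by simp
    have known: "c' (?g k) = c (?g k)" if "k \<in> {1, 2, 4}" for k
      using agree g[of k] inj[of k 0] inj[of k 3] that by auto
    have "c' (?g 0) = c (?g 0)"
      using forced_colour[OF c c'3 a(1,2)] known[of 1] known[of 4] colour by simp
    moreover have "c' (?g 3) = c (?g 3)"
      using forced_colour[OF c c'3 a(3,4)] known[of 2] known[of 4] colour by simp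
    ultimately show "\<forall>v\<in>V. c' v = c v" using agree by blast
  qed blast
  moreover have "card ?S = 3"
    using bij_betw_same_card[OF f_bij] g[of 0] g[of 3] inj[of 0 3] finite_V
    unfolding C5_V_def by (simp add: card_Diff_subset)
  ultimately show ?thesis using c by blast
qed

lemma sn_eq_3_if_C5: "sn V E = 3"
proof (rule antisym)
  obtain c S where c: "colouring3 c" and S: "determining_set V E c S" "card S = 3"
    using ex_determining_set_card_3_if_C5 by blast
  have "sn V E \<le> card S" using c chromatic by (intro sn_le_card_determining_set[OF finite_V _ S(1)]) simp
  then show "sn V E \<le> 3" using S(2) by simp
  show "3 \<le> sn V E"
  proof (rule sn_lower_bound[OF finite_V])
    show "proper_colouring V E (chromatic_number V E) c" using c chromatic by simp
    fix c' S assume "proper_colouring V E (chromatic_number V E) c'" "determining_set V E c' S"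
    then show "3 \<le> card S" using chromatic by (intro card_determining_set_ge_3_if_C5) simp_all
  qed
qed

end

lemma sn_eq_card_minus_2_if_C5:
  assumes "graph_iso V E C5_V C5_E"
  shows "sn V E = card V - 2"
proof -
  obtain f where f: "bij_betw f V C5_V" "\<forall>u\<in>V. \<forall>v\<in>V. {u, v} \<in> E \<longleftrightarrow> {f u, f v} \<in> C5_E"
    using assms unfolding graph_iso_def by blast
  then have "sn V E = 3" using sn_eq_3_if_C5[of f] unfolding adj_def by blast
  moreover have "card V = 5" using bij_betw_same_card[OF f(1)] unfolding C5_V_def by simp
  ultimately show ?thesis by simp
qed

end

theorem proposition2:
  fixes V :: "'a set" and E :: "'a set set"
  assumes "simple_graph V E" and "connected_graph V E" and "triangle_free E"
    and "chromatic_number V E = 3"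
  shows "sn V E = card V - 2 \<longleftrightarrow> graph_iso V E C5_V C5_E"
proof -
  interpret triangle_free_3_chromatic V E
    using assms(1,3,4) by unfold_locales
  obtain c0 where "min_colouring3 V E c0" using ex_min_colouring3 by blast
  then interpret min_colouring3 V E c0 .
  show ?thesis
  proof
    assume "sn V E = card V - 2"
    then have "\<not> forced_triple" using sn_add_3_le_if_forced_triple by fastforce
    then show "graph_iso V E C5_V C5_E" using forced_triple_or_C5[OF assms(2)] by blast
  next
    assume "graph_iso V E C5_V C5_E"
    then show "sn V E = card V - 2" by (rule sn_eq_card_minus_2_if_C5)
  qed
qed

end
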